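(* Quet's sequence $A$ is a permutation of $\mathbb{N}$; that is, $A:\mathbb{N}\to\mathbb{N}$ is a bijection.
   Context: $\mathbb{N}=\{0,1,2,\dots\}$. Quet's sequence $A:\mathbb{N}\to\mathbb{N}$ is defined by $A(0)=0$, $A(1)=1$, and for $n\ge1$, $A(n+1)$ is the least natural number such that $A(n+1)\notin\{A(0),\dots,A(n)\}$ and $\sum_{0\le i\le n+1}A(i)\equiv 0 \pmod{n}$. First values: $A=0,1,2,3,6,4,9,5,12,14,7,17,8,20,\dots$. *)

theory Defs
  imports Main
begin

text \<open>quet_list n is the list [A 0, A 1, ..., A n] of Quet's sequence.
  For n \<ge> 1, A (n+1) is the least natural number not among A 0..A n
  such that A 0 + ... + A (n+1) is divisible by n.\<close>
fun quet_list :: "nat \<Rightarrow> nat list" where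
  "quet_list 0 = [0]"
| "quet_list (Suc 0) = [0, 1]"
| "quet_list (Suc (Suc m)) =
     (let xs = quet_list (Suc m)
      in xs @ [LEAST a. a \<notin> set xs \<and> (sum_list xs + a) mod (Suc m) = 0])"

definition quetA :: "nat \<Rightarrow> nat" where
  "quetA n = last (quet_list n)"

end

theory Submission
  imports Defs
begin

text \<open>Write \<open>S\<^sub>n = A 0 + \<dots> + A n\<close>. Once \<open>S\<^sub>n = (n - 1) q\<close> and all numbers below \<open>q\<close>
  are used, the condition \<open>n \<mid> S\<^sub>n\<^sub>+\<^sub>1\<close> forces \<open>A (n + 1) \<equiv> q (mod n)\<close>, so the next
  term is \<open>q\<close> if that is still free and \<open>q + n\<close> otherwise; in the second case \<open>q\<close>
  grows by one. Since \<open>q\<close> cannot stay put in two consecutive steps, it tends to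
  infinity, so every number eventually occurs; distinctness of the terms is built
  into the definition.\<close>

lemma quet_list_Suc: "\<exists>x. quet_list (Suc k) = quet_list k @ [x]"
  by (cases k) (auto simp: Let_def)

lemma quet_list_eq_map: "quet_list k = map quetA [0..<Suc k]"
proof (induction k)
  case 0
  then show ?case by (simp add: quetA_def)
next
  case (Suc k)
  obtain x where x: "quet_list (Suc k) = quet_list k @ [x]"
    using quet_list_Suc by blast
  then have "quetA (Suc k) = x"
    by (simp add: quetA_def)
  with x Suc.IH show ?case
    by simp
qed

lemma exists_fresh_solution_mod:
  assumes "finite S"
  shows "\<exists>a. a \<notin> S \<and> (c + a) mod Suc n = 0"
proof -
  obtain t where t: "\<forall>x\<in>S. x < t"
    using assms unfolding finite_nat_set_iff_bounded by blast
  define a where "a = n * c + Suc n * t"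
  have "t \<le> a"
    by (simp add: a_def)
  with t have "a \<notin> S"
    by auto
  moreover have "c + a = Suc n * (c + t)"
    by (simp add: a_def algebra_simps)
  ultimately show ?thesis
    by (metis mod_mult_self1_is_0)
qed

lemma distinct_quet_list: "distinct (quet_list k)"
proof (induction k rule: quet_list.induct)
  case (3 m)
  let ?xs = "quet_list (Suc m)"
  have "\<exists>a. a \<notin> set ?xs \<and> (sum_list ?xs + a) mod Suc m = 0"
    by (rule exists_fresh_solution_mod) simp
  then have "(LEAST a. a \<notin> set ?xs \<and> (sum_list ?xs + a) mod Suc m = 0) \<notin> set ?xs"
    by (rule LeastI2_ex) blast
  with 3 show ?case
    by (simp add: Let_def)
qed simp_all

lemma inj_on_quetA_atMost: "inj_on quetA {..k}"
  using distinct_quet_list[of k]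
  unfolding quet_list_eq_map distinct_map set_upt atLeast0LessThan lessThan_Suc_atMost
  by blast

lemma set_quet_list_subset: "set (quet_list k) \<subseteq> range quetA"
  by (auto simp: quet_list_eq_map)

lemma Least_fresh_solution_mod:
  assumes sum: "sum_list xs = m * q"
    and bound: "\<forall>x\<in>set xs. x < q + Suc m"
    and below: "{..<q} \<subseteq> set xs"
  shows "(LEAST a. a \<notin> set xs \<and> (sum_list xs + a) mod Suc m = 0) =
    (if q \<in> set xs then q + Suc m else q)"
    (is "(LEAST a. ?P a) = _")
proof -
  have ge_q: "q \<le> y" if "?P y" for y
    using that below by (meson lessThan_iff not_le subsetD)
  show ?thesis
  proof (cases "q \<in> set xs")
    case False
    have "sum_list xs + q = Suc m * q"
      using sum by simp
    then have "?P q"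
      using False by (simp only: mod_mult_self1_is_0) simp
    with ge_q show ?thesis
      using False by (intro Least_equality) auto
  next
    case True
    have "sum_list xs + (q + Suc m) = Suc m * Suc q"
      using sum by simp
    moreover have "q + Suc m \<notin> set xs"
      using bound by auto
    ultimately have "?P (q + Suc m)"
      by (simp only: mod_mult_self1_is_0) simp
    moreover have "q + Suc m \<le> y" if "?P y" for y
    proof (rule ccontr)
      assume "\<not> q + Suc m \<le> y"
      moreover have "q < y"
        using that ge_q[OF that] True by (cases "y = q") auto
      ultimately obtain d where d: "y = q + d" "0 < d" "d < Suc m"
        by (intro that[of "y - q"]) auto
      have "(sum_list xs + y) mod Suc m = (d + Suc m * q) mod Suc m"
        using sum d(1) by (simp add: algebra_simps)
      also have "\<dots> = d"
        unfolding mod_mult_self2 using d(3) by (rule mod_less)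
      finally show False
        using that d(2) by simp
    qed
    ultimately show ?thesis
      using True by (intro Least_equality) auto
  qed
qed

text \<open>The invariant for the list \<open>A 0, \<dots>, A (m + 1)\<close>; the last conjunct makes \<open>q\<close>
  grow at least every other step.\<close>

definition quet_invariant :: "nat \<Rightarrow> nat list \<Rightarrow> nat \<Rightarrow> bool" where
  "quet_invariant m xs q \<longleftrightarrow>
     sum_list xs = m * q \<and> (\<forall>x\<in>set xs. x < q + Suc m) \<and> {..<q} \<subseteq> set xs \<and>
     m < 2 * q + (if q \<in> set xs then 1 else 0)"

lemma quet_invariant_snoc:
  assumes "quet_invariant m xs q"
  shows "quet_invariant (Suc m)
    (xs @ [if q \<in> set xs then q + Suc m else q]) (if q \<in> set xs then Suc q else q)"
  using assms by (cases "q \<in> set xs") (auto simp: quet_invariant_def less_Suc_eq)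

lemma quet_invariant_quet_list:
  assumes "1 \<le> m"
  shows "\<exists>q. quet_invariant m (quet_list (Suc m)) q"
  using assms
proof (induction m rule: dec_induct)
  case base
  have "(LEAST a. a \<notin> {0, 1} \<and> (Suc a) mod Suc 0 = 0) = (2::nat)"
    by (rule Least_equality) auto
  then have "quet_list (Suc 1) = [0, 1, 2]"
    by simp
  moreover have "quet_invariant 1 [0, 1, 2] 3"
    by (auto simp: quet_invariant_def)
  ultimately show ?case
    by auto
next
  case (step m)
  then obtain q where inv: "quet_invariant m (quet_list (Suc m)) q"
    by blast
  then have "quet_list (Suc (Suc m)) = quet_list (Suc m) @
      [if q \<in> set (quet_list (Suc m)) then q + Suc m else q]"
    unfolding quet_list.simps(3) Let_def quet_invariant_def
    using Least_fresh_solution_mod by presburger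
  then show ?case
    using quet_invariant_snoc[OF inv] by auto
qed

lemma quet_invariant_lessThan_half_subset:
  assumes "quet_invariant m xs q"
  shows "{..<m div 2} \<subseteq> set xs"
proof -
  have "m div 2 \<le> q" "{..<q} \<subseteq> set xs"
    using assms unfolding quet_invariant_def by (auto split: if_splits)
  then show ?thesis
    by auto
qed

theorem theorem9:
  shows "bij quetA"
proof (rule bijI)
  show "inj quetA"
  proof (rule injI)
    fix i j
    assume "quetA i = quetA j"
    with inj_on_quetA_atMost[of "max i j"] show "i = j"
      by (rule inj_onD) simp_all
  qed
  have "v \<in> range quetA" for v
  proof -
    have "1 \<le> 2 * v + 2"
      by simp
    then obtain q where "quet_invariant (2 * v + 2) (quet_list (Suc (2 * v + 2))) q"
      using quet_invariant_quet_list by blast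
    moreover have "v \<in> {..<(2 * v + 2) div 2}"
      by simp
    ultimately have "v \<in> set (quet_list (Suc (2 * v + 2)))"
      using quet_invariant_lessThan_half_subset by blast
    then show ?thesis
      using set_quet_list_subset by blast
  qed
  then show "surj quetA"
    by blast
qed

end
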